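(* Under the standing hypotheses (S), for every $\xi\in\mathbb H$ and $n\ge0$, \[\frac1{2\tau}\Big(\|\xi-X_{n+1}^\tau\|^2_{\mathbb H}-\|\xi-X_n^\tau\|^2_{\mathbb H}\Big)+\frac\lambda4\Big(\|\xi-X_n^\tau\|^2_{\mathbb H}+\|\xi-X_{n+1}^\tau\|^2_{\mathbb H}\Big)\] \[\le\phi^{\#}_{\rho_0}(\xi)-\phi^{\#}_{\rho_0}(X_{n+1}^\tau)+\frac\tau4\Big(\|\nabla\phi^{\#}_{\rho_0}(X_n^\tau)\|^2_{\mathbb H}-\|\nabla\phi^{\#}_{\rho_0}(X_{n+1}^\tau)\|^2_{\mathbb H}\Big)-\Big(\frac1{2\tau}+\frac\lambda4\Big)\|X_n^\tau-X_{n+1}^\tau\|^2_{\mathbb H}.\]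
   Context: Standing hypotheses (S): $\rho_0\in\mathcal P_2(\mathbb R^d)$; $\mathbb H=L^2(\mathbb R^d;\rho_0)$ is the Hilbert space of $\rho_0$-square-integrable maps $\mathbb R^d\to\mathbb R^d$ with $\langle\xi_1,\xi_2\rangle_{\mathbb H}=\int\langle\xi_1,\xi_2\rangle d\rho_0$; $\phi:\mathcal P_2(\mathbb R^d)\to\mathbb R$ has lift $\phi^{\#}_{\rho_0}(\xi):=\phi(\xi_{\#}\rho_0)$ which is Fréchet differentiable on $\mathbb H$ (gradient $\nabla\phi^{\#}_{\rho_0}$), $\lambda$-convex on $\mathbb H$ for some $\lambda\in\mathbb R$ (i.e. $\phi^{\#}_{\rho_0}((1-t)\xi_1+t\xi_2)\le(1-t)\phi^{\#}_{\rho_0}(\xi_1)+t\phi^{\#}_{\rho_0}(\xi_2)-\frac\lambda2t(1-t)\|\xi_1-\xi_2\|_{\mathbb H}^2$), and $\inf_{\mathbb H}\phi^{\#}_{\rho_0}>-\infty$; the time step $\tau>0$ satisfies $\lambda/2+1/\tau>0$; $X_0^\tau\in\mathbb H$. Lagrangian trapezoidal scheme: $X_{n+1}^\tau$ is the (unique) minimizer over $\xi\in\mathbb H$ of $\tfrac12\phi^{\#}_{\rho_0}(\xi)+\tfrac12\langle\nabla\phi^{\#}_{\rho_0}(X_n^\tau),\xi\rangle_{\mathbb H}+\tfrac1{2\tau}\|\xi-X_n^\tau\|^2_{\mathbb H}$; equivalently $X_{n+1}^\tau=X_n^\tau-\frac\tau2\big(\nabla\phi^{\#}_{\rho_0}(X_{n+1}^\tau)+\nabla\phi^{\#}_{\rho_0}(X_n^\tau)\big)$.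 *)

theory Defs
  imports "HOL-Analysis.Analysis"
begin

text \<open>The Hilbert space H = L2(R^d; rho0) is modelled by an arbitrary real Hilbert space
  type 'a (class real_inner + complete_space); the lift phi# of phi is the function F on it.\<close>

definition lambda_convex :: "real \<Rightarrow> ('a::real_normed_vector \<Rightarrow> real) \<Rightarrow> bool" where
  "lambda_convex lam F \<longleftrightarrow>
     (\<forall>x1 x2 t. 0 \<le> t \<and> t \<le> 1 \<longrightarrow>
        F ((1 - t) *\<^sub>R x1 + t *\<^sub>R x2)
          \<le> (1 - t) * F x1 + t * F x2 - lam / 2 * t * (1 - t) * (norm (x1 - x2))\<^sup>2)"

definition trap_functional ::
    "('a::real_inner \<Rightarrow> real) \<Rightarrow> ('a \<Rightarrow> 'a) \<Rightarrow> real \<Rightarrow> 'a \<Rightarrow> 'a \<Rightarrow> real" where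
  "trap_functional F G tau x z =
     F z / 2 + inner (G x) z / 2 + (norm (z - x))\<^sup>2 / (2 * tau)"

definition trap_step ::
    "('a::real_inner \<Rightarrow> real) \<Rightarrow> ('a \<Rightarrow> 'a) \<Rightarrow> real \<Rightarrow> 'a \<Rightarrow> 'a \<Rightarrow> bool" where
  "trap_step F G tau x y \<longleftrightarrow>
     (\<forall>z. trap_functional F G tau x y \<le> trap_functional F G tau x z)"

end

theory Submission
  imports Defs
begin

text \<open>Minimality of \<open>X (Suc n)\<close> gives the Euler-Lagrange equation
  \<open>X (Suc n) - X n = - (tau/2) (G (X n) + G (X (Suc n)))\<close>, and \<open>lam\<close>-convexity of the
  differentiable \<open>F\<close> gives the first-order bound
  \<open>F z \<ge> F w + inner (G w) (z - w) + lam/2 \<parallel>z - w\<parallel>\<^sup>2\<close>. Averaging this bound over the pairs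
  \<open>(\<xi>, X (Suc n))\<close>, \<open>(\<xi>, X n)\<close>, \<open>(X n, X (Suc n))\<close> and eliminating the three gradient
  terms with the Euler-Lagrange equation (which turns them into differences of squared norms)
  yields the estimate.\<close>

lemma lambda_convex_difference_quotient:
  assumes conv: "lambda_convex lam F" and t: "0 < t" "t \<le> 1"
  shows "(F (w + t *\<^sub>R (z - w)) - F w) / t \<le> F z - F w - lam / 2 * (1 - t) * (norm (z - w))\<^sup>2"
proof -
  have "F ((1 - t) *\<^sub>R w + t *\<^sub>R z) \<le> (1 - t) * F w + t * F z - lam / 2 * t * (1 - t) * (norm (w - z))\<^sup>2"
    using conv t unfolding lambda_convex_def by auto
  moreover have "(1 - t) *\<^sub>R w + t *\<^sub>R z = w + t *\<^sub>R (z - w)"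
    by (simp add: algebra_simps)
  ultimately have "F (w + t *\<^sub>R (z - w)) - F w \<le> t * (F z - F w - lam / 2 * (1 - t) * (norm (z - w))\<^sup>2)"
    by (simp add: norm_minus_commute algebra_simps)
  with t show ?thesis
    by (simp add: divide_le_eq mult.commute)
qed

lemma lambda_convex_first_order:
  fixes F :: "'a::real_inner \<Rightarrow> real"
  assumes grad: "(F has_derivative (\<lambda>h. inner g h)) (at w)"
    and conv: "lambda_convex lam F"
  shows "F w + inner g (z - w) + lam / 2 * (norm (z - w))\<^sup>2 \<le> F z"
proof -
  define f where "f t = F (w + t *\<^sub>R (z - w))" for t :: real
  have "((\<lambda>t. w + t *\<^sub>R (z - w)) has_derivative (\<lambda>t. t *\<^sub>R (z - w))) (at 0)"
    by (auto intro!: derivative_eq_intros)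
  moreover have "(F has_derivative (\<lambda>h. inner g h)) (at (w + 0 *\<^sub>R (z - w)))"
    using grad by simp
  ultimately have "(f has_derivative (\<lambda>t. inner g (t *\<^sub>R (z - w)))) (at 0)"
    unfolding f_def[abs_def] by (rule has_derivative_compose)
  then have "(f has_field_derivative inner g (z - w)) (at 0)"
    by (simp add: has_field_derivative_def mult.commute[of _ "inner g (z - w)"])
  then have quotient_lim: "((\<lambda>t. (f (0 + t) - f 0) / t) \<longlongrightarrow> inner g (z - w)) (at_right 0)"
    unfolding DERIV_def by (rule filterlim_mono) (auto simp: at_le)
  have bound_lim: "((\<lambda>t. F z - F w - lam / 2 * (1 - t) * (norm (z - w))\<^sup>2) \<longlongrightarrow>
      F z - F w - lam / 2 * (1 - 0) * (norm (z - w))\<^sup>2) (at_right 0)"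
    by (intro tendsto_intros)
  have "eventually (\<lambda>t. t \<in> {0<..<1}) (at_right (0::real))"
    by (rule eventually_at_right_real) simp
  then have "eventually (\<lambda>t. (f (0 + t) - f 0) / t
      \<le> F z - F w - lam / 2 * (1 - t) * (norm (z - w))\<^sup>2) (at_right 0)"
    by eventually_elim (use lambda_convex_difference_quotient[OF conv] in \<open>simp add: f_def\<close>)
  with quotient_lim bound_lim
  have "inner g (z - w) \<le> F z - F w - lam / 2 * (1 - 0) * (norm (z - w))\<^sup>2"
    by (intro tendsto_le[of "at_right 0"]) simp_all
  then show ?thesis by simp
qed

lemma trap_step_euler_lagrange:
  fixes F :: "'a::real_inner \<Rightarrow> real"
  assumes grad: "\<And>x. (F has_derivative (\<lambda>h. inner (G x) h)) (at x)"
    and step: "trap_step F G tau x y" and tau: "tau \<noteq> 0"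
  shows "y - x = - (tau / 2) *\<^sub>R (G x + G y)"
proof -
  define v where "v = (1/2) *\<^sub>R G y + (1/2) *\<^sub>R G x + (1 / tau) *\<^sub>R (y - x)"
  have "(trap_functional F G tau x has_derivative
      (\<lambda>k. inner (G y) k / 2 + inner (G x) k / 2 + (inner k (y - x) + inner (y - x) k) / (2 * tau))) (at y)"
    unfolding trap_functional_def[abs_def] power2_norm_eq_inner
    using tau by (auto intro!: derivative_eq_intros grad ext simp: field_simps)
  also have "(\<lambda>k. inner (G y) k / 2 + inner (G x) k / 2 + (inner k (y - x) + inner (y - x) k) / (2 * tau))
      = (\<lambda>k. inner v k)"
    unfolding v_def by (simp add: inner_add_left inner_commute[of _ "y - x"] add_divide_distrib)
  finally have "(trap_functional F G tau x has_derivative (\<lambda>k. inner v k)) (at y)" .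
  moreover have "eventually (\<lambda>z. trap_functional F G tau x y \<le> trap_functional F G tau x z) (at y)"
    using step unfolding trap_step_def by simp
  ultimately have "(\<lambda>k. inner v k) = (\<lambda>k. 0)"
    by (rule has_derivative_local_min)
  then have "v = 0"
    by (metis inner_eq_zero_iff)
  moreover have "tau *\<^sub>R v = (y - x) + (tau / 2) *\<^sub>R (G x + G y)"
    unfolding v_def using tau by (simp add: algebra_simps)
  ultimately show ?thesis
    by (simp add: add_eq_0_iff2)
qed

lemma trapezoidal_inner_identity:
  fixes x y z g h :: "'a::real_inner"
  assumes step: "y - x = - (tau / 2) *\<^sub>R (g + h)" and tau: "tau \<noteq> 0"
  shows "inner h (z - y) + inner g (z - x) + inner h (x - y)
       = ((norm (z - y))\<^sup>2 + (norm (x - y))\<^sup>2 - (norm (z - x))\<^sup>2) / tau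
         + tau / 2 * ((norm h)\<^sup>2 - (norm g)\<^sup>2)"
proof -
  have "g + h = - (2 / tau) *\<^sub>R (y - x)"
    unfolding step using tau by simp
  then have sum: "inner (g + h) (z - y) = - (2 / tau) * inner (z - y) (y - x)"
    by (simp add: inner_commute)
  have diff: "inner (g - h) (y - x) = tau / 2 * ((norm h)\<^sup>2 - (norm g)\<^sup>2)"
    unfolding step by (simp add: power2_norm_eq_inner algebra_simps inner_commute[of h g])
  have polar: "inner (z - y) (y - x) = ((norm (z - x))\<^sup>2 - (norm (z - y))\<^sup>2 - (norm (x - y))\<^sup>2) / 2"
    using dot_norm[of "z - y" "y - x"] by (simp add: norm_minus_commute)
  have "inner h (z - y) + inner g (z - x) + inner h (x - y)
      = inner (g + h) (z - y) + inner (g - h) (y - x)"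
    by (simp add: algebra_simps)
  also have "\<dots> = - (2 / tau) * inner (z - y) (y - x) + tau / 2 * ((norm h)\<^sup>2 - (norm g)\<^sup>2)"
    by (simp only: sum diff)
  also have "\<dots> = ((norm (z - y))\<^sup>2 + (norm (x - y))\<^sup>2 - (norm (z - x))\<^sup>2) / tau
         + tau / 2 * ((norm h)\<^sup>2 - (norm g)\<^sup>2)"
    unfolding polar using tau by (simp add: field_simps)
  finally show ?thesis .
qed

theorem mainTheorem9:
  fixes F :: "'a::{real_inner, complete_space} \<Rightarrow> real"
    and G :: "'a \<Rightarrow> 'a"
    and lam tau :: real
    and X :: "nat \<Rightarrow> 'a"
    and \<xi> :: 'a
    and n :: nat
  assumes grad: "\<And>x. (F has_derivative (\<lambda>h. inner (G x) h)) (at x)"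
    and conv: "lambda_convex lam F"
    and bdd: "bdd_below (range F)"
    and tau: "tau > 0"
    and step_cond: "lam / 2 + 1 / tau > 0"
    and scheme: "\<And>k. trap_step F G tau (X k) (X (Suc k))"
  shows "1 / (2 * tau) * ((norm (\<xi> - X (Suc n)))\<^sup>2 - (norm (\<xi> - X n))\<^sup>2)
           + lam / 4 * ((norm (\<xi> - X n))\<^sup>2 + (norm (\<xi> - X (Suc n)))\<^sup>2)
         \<le> F \<xi> - F (X (Suc n))
           + tau / 4 * ((norm (G (X n)))\<^sup>2 - (norm (G (X (Suc n))))\<^sup>2)
           - (1 / (2 * tau) + lam / 4) * (norm (X n - X (Suc n)))\<^sup>2"
proof -
  \<comment> \<open>\<open>bdd\<close> and \<open>step_cond\<close> only make the scheme well defined (a unique minimiser exists);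
    the estimate uses merely that each \<open>X (Suc k)\<close> is a minimiser.\<close>
  define x y where "x = X n" and "y = X (Suc n)"
  have "y - x = - (tau / 2) *\<^sub>R (G x + G y)"
    using trap_step_euler_lagrange[OF grad scheme[of n]] tau by (simp add: x_def y_def)
  from trapezoidal_inner_identity[OF this, of \<xi>] tau
  have inner_y: "inner (G y) (\<xi> - y)
      = ((norm (\<xi> - y))\<^sup>2 + (norm (x - y))\<^sup>2 - (norm (\<xi> - x))\<^sup>2) / tau
        + tau / 2 * ((norm (G y))\<^sup>2 - (norm (G x))\<^sup>2) - inner (G x) (\<xi> - x) - inner (G y) (x - y)"
    by linarith
  have "F y + inner (G y) (\<xi> - y) + lam / 2 * (norm (\<xi> - y))\<^sup>2 \<le> F \<xi>"
    and "F x + inner (G x) (\<xi> - x) + lam / 2 * (norm (\<xi> - x))\<^sup>2 \<le> F \<xi>"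
    and "F y + inner (G y) (x - y) + lam / 2 * (norm (x - y))\<^sup>2 \<le> F x"
    by (rule lambda_convex_first_order[OF grad conv])+
  then have "0 \<le> ((F \<xi> - F y - inner (G y) (\<xi> - y) - lam / 2 * (norm (\<xi> - y))\<^sup>2)
      + (F \<xi> - F x - inner (G x) (\<xi> - x) - lam / 2 * (norm (\<xi> - x))\<^sup>2)
      + (F x - F y - inner (G y) (x - y) - lam / 2 * (norm (x - y))\<^sup>2)) / 2"
    by simp
  also have "\<dots> = F \<xi> - F y + tau / 4 * ((norm (G x))\<^sup>2 - (norm (G y))\<^sup>2)
      - (1 / (2 * tau) + lam / 4) * (norm (x - y))\<^sup>2
      - (1 / (2 * tau) * ((norm (\<xi> - y))\<^sup>2 - (norm (\<xi> - x))\<^sup>2)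
         + lam / 4 * ((norm (\<xi> - x))\<^sup>2 + (norm (\<xi> - y))\<^sup>2))"
    unfolding inner_y using tau by (simp add: field_simps)
  finally show ?thesis
    unfolding x_def y_def by (simp only: diff_ge_0_iff_ge)
qed

end
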